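(* Let $P^\ast$ be an $n\times k$ minimal matrix representation of a $0/1$-polytope with $k$ vertices, and let $w_k^\top=(2^{k-1},\dots,2^1,2^0)$. Then the entries of the vector $P^\ast w_k$ are non-increasing from top to bottom.
   Context: For $x\in\{0,1\}^n$ its column number is $v_n^\top x$ with $v_n^\top=(2^0,2^1,\dots,2^{n-1})$. For an $n\times m$ $0/1$-matrix $P$ with pairwise distinct columns, $\nu(P)$ is the vector of its column numbers sorted increasingly. $P$ is a minimal matrix representation if its column numbers $v_n^\top P$ are strictly increasing from left to right and $\nu(P)\preceq\nu(Q)$ in lexicographic order for every matrix $Q$ obtained from $P$ by complementing (exchanging $0\leftrightarrow1$) the entries of some subset of its rows and then permuting its rows. *)

theory Defs
  imports Main
begin

text \<open>An n x m 0/1-matrix is represented as a function P :: nat => nat => nat,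
  P i j being the entry in row i (0-based, top row i = 0) and column j (0-based,
  leftmost j = 0); only entries with i < n, j < m are relevant.\<close>

definition is01 :: "nat \<Rightarrow> nat \<Rightarrow> (nat \<Rightarrow> nat \<Rightarrow> nat) \<Rightarrow> bool" where
  "is01 n m P \<longleftrightarrow> (\<forall>i<n. \<forall>j<m. P i j \<in> {0, 1})"

definition colnum :: "nat \<Rightarrow> (nat \<Rightarrow> nat \<Rightarrow> nat) \<Rightarrow> nat \<Rightarrow> nat" where
  "colnum n P j = (\<Sum>i<n. 2 ^ i * P i j)"

definition distinct_cols :: "nat \<Rightarrow> nat \<Rightarrow> (nat \<Rightarrow> nat \<Rightarrow> nat) \<Rightarrow> bool" where
  "distinct_cols n m P \<longleftrightarrow>
     (\<forall>j<m. \<forall>j'<m. j \<noteq> j' \<longrightarrow> (\<exists>i<n. P i j \<noteq> P i j'))"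

definition nu :: "nat \<Rightarrow> nat \<Rightarrow> (nat \<Rightarrow> nat \<Rightarrow> nat) \<Rightarrow> nat list" where
  "nu n m P = sort (map (colnum n P) [0..<m])"

definition lex_le :: "nat list \<Rightarrow> nat list \<Rightarrow> bool" where
  "lex_le xs ys \<longleftrightarrow> xs = ys \<or> (xs, ys) \<in> lexord {(a, b). a < b}"

definition switch_perm :: "nat set \<Rightarrow> (nat \<Rightarrow> nat) \<Rightarrow> (nat \<Rightarrow> nat \<Rightarrow> nat) \<Rightarrow> (nat \<Rightarrow> nat \<Rightarrow> nat)" where
  "switch_perm S \<sigma> P = (\<lambda>i j. if \<sigma> i \<in> S then 1 - P (\<sigma> i) j else P (\<sigma> i) j)"

definition minimal_rep :: "nat \<Rightarrow> nat \<Rightarrow> (nat \<Rightarrow> nat \<Rightarrow> nat) \<Rightarrow> bool" where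
  "minimal_rep n m P \<longleftrightarrow>
     is01 n m P \<and> distinct_cols n m P \<and>
     (\<forall>j j'. j < j' \<and> j' < m \<longrightarrow> colnum n P j < colnum n P j') \<and>
     (\<forall>S \<sigma>. S \<subseteq> {..<n} \<and> bij_betw \<sigma> {..<n} {..<n} \<longrightarrow>
        lex_le (nu n m P) (nu n m (switch_perm S \<sigma> P)))"

definition rownum_w :: "nat \<Rightarrow> (nat \<Rightarrow> nat \<Rightarrow> nat) \<Rightarrow> nat \<Rightarrow> nat" where
  "rownum_w m P i = (\<Sum>j<m. P i j * 2 ^ (m - 1 - j))"

end

theory Submission
  imports Defs "HOL-Combinatorics.Transposition"
begin

text \<open>If a lower row i' had a larger value under w than a higher row i, then at the first
  column where the two rows differ, row i has a 0 and row i' a 1. Exchanging the two rows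
  leaves the columns to the left unchanged and lowers the number of that column, because row
  i' carries the most significant changed bit. The sorted column numbers of the new matrix
  are then lexicographically smaller, contradicting minimality.\<close>

definition binval :: "nat \<Rightarrow> (nat \<Rightarrow> nat) \<Rightarrow> nat" where
  "binval n g = (\<Sum>r<n. 2 ^ r * g r)"

abbreviation bits :: "nat \<Rightarrow> (nat \<Rightarrow> nat) \<Rightarrow> bool" where
  "bits n g \<equiv> \<forall>r<n. g r \<in> {0, 1}"

lemma binval_less_pow2: "bits n g \<Longrightarrow> binval n g < 2 ^ n"
proof (induction n)
  case 0
  then show ?case by (simp add: binval_def)
next
  case (Suc n)
  then have "binval n g < 2 ^ n" and "2 ^ n * g n \<le> (2::nat) ^ n" by auto
  moreover have "binval (Suc n) g = binval n g + 2 ^ n * g n" by (simp add: binval_def)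
  ultimately show ?case by (metis add_less_le_mono mult_2 power_Suc)
qed

lemma binval_less_of_highest_difference:
  assumes "bits n g" "bits n h" "r0 < n" "g r0 = 0" "h r0 = 1"
    and "\<forall>r. r0 < r \<and> r < n \<longrightarrow> g r = h r"
  shows "binval n g < binval n h"
  using assms
proof (induction n)
  case 0
  then show ?case by simp
next
  case (Suc n)
  show ?case
  proof (cases "r0 = n")
    case True
    have "binval n g < 2 ^ n" using Suc.prems by (intro binval_less_pow2) auto
    with True Suc.prems show ?thesis by (simp add: binval_def)
  next
    case False
    with Suc.prems have "r0 < n" by simp
    with Suc have "binval n g < binval n h" and "g n = h n" by auto
    then show ?thesis by (simp add: binval_def)
  qed
qed

lemma highest_difference:
  fixes n :: nat
  assumes "\<exists>r<n. g r \<noteq> h r"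
  obtains r0 where "r0 < n" "g r0 \<noteq> h r0" "\<forall>r. r0 < r \<and> r < n \<longrightarrow> g r = h r"
proof -
  define D where "D = {r. r < n \<and> g r \<noteq> h r}"
  have "finite D" by (rule finite_subset[of _ "{..<n}"]) (auto simp: D_def)
  moreover have "D \<noteq> {}" using assms by (auto simp: D_def)
  ultimately have "Max D \<in> D" "\<forall>r\<in>D. r \<le> Max D" by auto
  then show ?thesis by (intro that[of "Max D"]) (auto simp: D_def not_le[symmetric])
qed

lemma binval_less_imp_highest_difference:
  assumes "bits n g" "bits n h" "binval n g < binval n h"
  obtains r0 where "r0 < n" "g r0 = 0" "h r0 = 1" "\<forall>r. r0 < r \<and> r < n \<longrightarrow> g r = h r"
proof -
  have "\<exists>r<n. g r \<noteq> h r"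
  proof (rule ccontr)
    assume "\<not> (\<exists>r<n. g r \<noteq> h r)"
    then have "binval n g = binval n h" unfolding binval_def by (intro sum.cong) auto
    with assms(3) show False by simp
  qed
  then obtain r0 where r0: "r0 < n" "g r0 \<noteq> h r0" "\<forall>r. r0 < r \<and> r < n \<longrightarrow> g r = h r"
    by (rule highest_difference)
  have "\<not> (g r0 = 1 \<and> h r0 = 0)"
    using binval_less_of_highest_difference[of n h g r0] assms r0 by auto
  with r0 assms(1,2) show ?thesis by (intro that[of r0]) force+
qed

lemma binval_inj:
  assumes "bits n g" "bits n h" "binval n g = binval n h"
  shows "\<forall>r<n. g r = h r"
proof (rule ccontr)
  assume "\<not> (\<forall>r<n. g r = h r)"
  then have "\<exists>r<n. g r \<noteq> h r" by auto
  then obtain r0 where r0: "r0 < n" "g r0 \<noteq> h r0" "\<forall>r. r0 < r \<and> r < n \<longrightarrow> g r = h r"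
    by (rule highest_difference)
  moreover have "g r0 \<in> {0, 1}" "h r0 \<in> {0, 1}" using assms(1,2) r0(1) by auto
  ultimately consider "g r0 = 0" "h r0 = 1" | "h r0 = 0" "g r0 = 1" by auto
  then show False
  proof cases
    case 1
    with assms(1,2) r0 have "binval n g < binval n h"
      by (intro binval_less_of_highest_difference[of n g h r0]) auto
    with assms(3) show False by simp
  next
    case 2
    with assms(1,2) r0 have "binval n h < binval n g"
      by (intro binval_less_of_highest_difference[of n h g r0]) auto
    with assms(3) show False by simp
  qed
qed

lemma colnum_eq_binval: "colnum n P j = binval n (\<lambda>r. P r j)"
  by (simp add: colnum_def binval_def)

lemma rownum_w_eq_binval: "rownum_w k P i = binval k (\<lambda>r. P i (k - Suc r))"
  unfolding rownum_w_def binval_def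
  by (subst sum.nat_diff_reindex[symmetric]) (auto intro!: sum.cong simp: Suc_diff_Suc)

lemma rownum_w_less_imp_first_difference:
  assumes "is01 n k P" "i < n" "i' < n" "rownum_w k P i < rownum_w k P i'"
  obtains j0 where "j0 < k" "P i j0 = 0" "P i' j0 = 1" "\<forall>j<j0. P i j = P i' j"
proof -
  have "bits k (\<lambda>r. P i (k - Suc r))" "bits k (\<lambda>r. P i' (k - Suc r))"
    using assms(1-3) by (auto simp: is01_def)
  then obtain r0 where r0: "r0 < k" "P i (k - Suc r0) = 0" "P i' (k - Suc r0) = 1"
    "\<forall>r. r0 < r \<and> r < k \<longrightarrow> P i (k - Suc r) = P i' (k - Suc r)"
    using assms(4) unfolding rownum_w_eq_binval by (rule binval_less_imp_highest_difference)
  have "P i j = P i' j" if "j < k - Suc r0" for j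
    using r0(4)[rule_format, of "k - Suc j"] that by (simp add: Suc_diff_Suc)
  with r0 show ?thesis by (intro that[of "k - Suc r0"]) auto
qed

lemma inj_on_colnum:
  assumes "is01 n m P" "distinct_cols n m P"
  shows "inj_on (colnum n P) {..<m}"
proof (rule inj_onI)
  fix j j' assume "j \<in> {..<m}" "j' \<in> {..<m}" "colnum n P j = colnum n P j'"
  with assms(1) have "\<forall>r<n. P r j = P r j'"
    by (intro binval_inj) (auto simp: is01_def colnum_eq_binval)
  with assms(2) \<open>j \<in> {..<m}\<close> \<open>j' \<in> {..<m}\<close> show "j = j'"
    by (auto simp: distinct_cols_def)
qed

lemma switch_perm_empty: "switch_perm {} \<sigma> P = (\<lambda>i. P (\<sigma> i))"
  by (simp add: switch_perm_def)

lemma is01_permute_rows: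
  "is01 n m P \<Longrightarrow> bij_betw \<sigma> {..<n} {..<n} \<Longrightarrow> is01 n m (\<lambda>i. P (\<sigma> i))"
  by (auto simp: is01_def dest: bij_betwE)

lemma distinct_cols_permute_rows:
  assumes "distinct_cols n m P" "bij_betw \<sigma> {..<n} {..<n}"
  shows "distinct_cols n m (\<lambda>i. P (\<sigma> i))"
  unfolding distinct_cols_def
proof (intro allI impI)
  fix j j' assume "j < m" "j' < m" "j \<noteq> j'"
  with assms(1) obtain r where "r < n" "P r j \<noteq> P r j'" by (auto simp: distinct_cols_def)
  moreover from \<open>r < n\<close> assms(2) obtain s where "s < n" "\<sigma> s = r"
    by (metis bij_betw_iff_bijections lessThan_iff)
  ultimately show "\<exists>s<n. P (\<sigma> s) j \<noteq> P (\<sigma> s) j'" by auto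
qed

lemma nu_eq_map_colnum:
  "strict_mono_on {..<m} (colnum n P) \<Longrightarrow> nu n m P = map (colnum n P) [0..<m]"
  unfolding nu_def
  by (intro sorted_sort_id) (auto simp: sorted_iff_nth_mono intro: strict_mono_on_leD)

lemma lexord_less_of_new_element:
  fixes xs ys :: "nat list"
  assumes "sorted xs" "sorted ys" "distinct ys" "length xs = length ys"
    and "a \<in> set xs" "a \<notin> set ys" "\<forall>b\<in>set ys - set xs. a < b"
  shows "(xs, ys) \<in> lexord {(a, b). a < b}"
  using assms
proof (induction xs arbitrary: ys)
  case Nil
  then show ?case by simp
next
  case (Cons x xs)
  then obtain y ys' where ys: "ys = y # ys'" by (cases ys) auto
  consider "x = y" | "x < y" | "y < x" by linarith
  then show ?case
  proof cases
    case 1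
    with Cons.prems ys have "(xs, ys') \<in> lexord {(a, b). a < b}" by (intro Cons.IH) auto
    with ys 1 show ?thesis by simp
  next
    case 2
    with ys show ?thesis by simp
  next
    case 3
    with Cons.prems(1) have "y \<notin> set (x # xs)" by auto
    with Cons.prems ys have "x \<le> a" "a < y" by auto
    with 3 show ?thesis by simp
  qed
qed

lemma sort_map_lexord_less:
  fixes c d :: "nat \<Rightarrow> nat"
  assumes "strict_mono_on {..<k} c" "inj_on d {..<k}" "j0 < k"
    and "\<forall>j<j0. d j = c j" "d j0 < c j0"
  shows "(sort (map d [0..<k]), map c [0..<k]) \<in> lexord {(a, b). a < b}"
proof (rule lexord_less_of_new_element[where a = "d j0"])
  have c_mono: "c j0 \<le> c j" if "j0 \<le> j" "j < k" for j
    using assms(1,3) that by (auto intro: strict_mono_on_leD)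
  show "sorted (map c [0..<k])"
    using assms(1) by (auto simp: sorted_iff_nth_mono intro: strict_mono_on_leD)
  show "distinct (map c [0..<k])"
    using strict_mono_on_imp_inj_on[OF assms(1)] by (simp add: distinct_map atLeast0LessThan)
  show "d j0 \<notin> set (map c [0..<k])"
  proof
    assume "d j0 \<in> set (map c [0..<k])"
    then obtain j where j: "j < k" "d j0 = c j" by auto
    show False
    proof (cases "j < j0")
      case True
      with j assms(4) have "d j = d j0" by simp
      with True j(1) assms(2,3) show False by (auto dest: inj_onD)
    next
      case False
      with j(1) c_mono have "c j0 \<le> c j" by simp
      with j(2) assms(5) show False by simp
    qed
  qed
  show "\<forall>b\<in>set (map c [0..<k]) - set (sort (map d [0..<k])). d j0 < b"
  proof
    fix b assume b: "b \<in> set (map c [0..<k]) - set (sort (map d [0..<k]))"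
    then obtain j where j: "j < k" "b = c j" by auto
    have "\<not> j < j0"
    proof
      assume "j < j0"
      with j(2) assms(4) have "b = d j" by simp
      with j(1) have "b \<in> set (sort (map d [0..<k]))" by simp
      with b show False by simp
    qed
    with j(1) c_mono have "c j0 \<le> c j" by simp
    with j(2) assms(5) show "d j0 < b" by simp
  qed
qed (use assms(3) in auto)

lemma lexord_less_imp_not_lex_le:
  assumes "(xs, ys) \<in> lexord {(a, b). (a::nat) < b}"
  shows "\<not> lex_le ys xs"
proof
  assume "lex_le ys xs"
  then consider "ys = xs" | "(ys, xs) \<in> lexord {(a, b). a < b}" unfolding lex_le_def by blast
  then show False
  proof cases
    case 1
    with assms lexord_irreflexive[of "{(a, b). a < b}" xs] show False by simp
  next
    case 2
    moreover have "asym {(a, b). (a::nat) < b}" by (auto intro: asymI)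
    ultimately show False using assms lexord_asymmetric by blast
  qed
qed

lemma nu_swap_rows_lexord_less:
  assumes P01: "is01 n k P" and Pdist: "distinct_cols n k P"
    and mono: "strict_mono_on {..<k} (colnum n P)"
    and "i < i'" "i' < n" and j0: "j0 < k" "P i j0 = 0" "P i' j0 = 1" "\<forall>j<j0. P i j = P i' j"
  shows "(nu n k (\<lambda>r. P (transpose i i' r)), nu n k P) \<in> lexord {(a, b). a < b}"
proof -
  define Q where "Q = (\<lambda>r. P (transpose i i' r))"
  have bij: "bij_betw (transpose i i') {..<n} {..<n}" using \<open>i < i'\<close> \<open>i' < n\<close> by simp
  have Q01: "is01 n k Q" unfolding Q_def using P01 bij by (rule is01_permute_rows)
  have Q_other: "Q r = P r" if "r \<noteq> i" "r \<noteq> i'" for r using that by (simp add: Q_def)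
  have "Q r j = P r j" if "j < j0" for r j
    using j0(4) that Q_other by (cases "r = i"; cases "r = i'") (auto simp: Q_def)
  then have Q_left: "\<forall>j<j0. colnum n Q j = colnum n P j" by (simp add: colnum_def)
  have Q_j0: "colnum n Q j0 < colnum n P j0"
    unfolding colnum_eq_binval
  proof (rule binval_less_of_highest_difference[of n _ _ i'])
    show "bits n (\<lambda>r. Q r j0)" "bits n (\<lambda>r. P r j0)"
      using Q01 P01 j0(1) by (auto simp: is01_def)
    show "Q i' j0 = 0" using j0(2) by (simp add: Q_def)
    show "\<forall>r. i' < r \<and> r < n \<longrightarrow> Q r j0 = P r j0" using \<open>i < i'\<close> Q_other by auto
  qed (use j0(3) \<open>i' < n\<close> in auto)
  have "distinct_cols n k Q" unfolding Q_def using Pdist bij by (rule distinct_cols_permute_rows)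
  with Q01 have "inj_on (colnum n Q) {..<k}" by (rule inj_on_colnum)
  with mono j0(1) Q_left Q_j0
  have "(sort (map (colnum n Q) [0..<k]), map (colnum n P) [0..<k]) \<in> lexord {(a, b). a < b}"
    by (intro sort_map_lexord_less)
  then show ?thesis unfolding Q_def[symmetric] nu_def[of n k Q] nu_eq_map_colnum[OF mono] .
qed

theorem lemma4p13:
  fixes n k :: nat and P :: "nat \<Rightarrow> nat \<Rightarrow> nat"
  assumes "minimal_rep n k P"
  shows "\<forall>i i'. i \<le> i' \<and> i' < n \<longrightarrow> rownum_w k P i' \<le> rownum_w k P i"
proof (intro allI impI, rule ccontr)
  fix i i' assume "i \<le> i' \<and> i' < n" "\<not> rownum_w k P i' \<le> rownum_w k P i"
  then have "i < i'" "i < n" "i' < n" and less: "rownum_w k P i < rownum_w k P i'"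
    by (auto simp: nat_less_le)
  from assms have P01: "is01 n k P" and Pdist: "distinct_cols n k P"
    and increasing: "\<forall>j j'. j < j' \<and> j' < k \<longrightarrow> colnum n P j < colnum n P j'"
    and minimal: "\<forall>S \<sigma>. S \<subseteq> {..<n} \<and> bij_betw \<sigma> {..<n} {..<n} \<longrightarrow>
      lex_le (nu n k P) (nu n k (switch_perm S \<sigma> P))"
    unfolding minimal_rep_def by blast+
  from increasing have mono: "strict_mono_on {..<k} (colnum n P)" by (auto intro: strict_mono_onI)
  obtain j0 where "j0 < k" "P i j0 = 0" "P i' j0 = 1" "\<forall>j<j0. P i j = P i' j"
    using P01 \<open>i < n\<close> \<open>i' < n\<close> less by (rule rownum_w_less_imp_first_difference)
  with P01 Pdist mono \<open>i < i'\<close> \<open>i' < n\<close>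
  have "(nu n k (\<lambda>r. P (transpose i i' r)), nu n k P) \<in> lexord {(a, b). a < b}"
    by (intro nu_swap_rows_lexord_less)
  then have "\<not> lex_le (nu n k P) (nu n k (switch_perm {} (transpose i i') P))"
    unfolding switch_perm_empty by (rule lexord_less_imp_not_lex_le)
  moreover have "bij_betw (transpose i i') {..<n} {..<n}" using \<open>i < n\<close> \<open>i' < n\<close> by simp
  ultimately show False using minimal by auto
qed

end
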